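(* As formal power series in $w,x,y,z$, $$Q(w,x,y,z):=\sum_{k\ge1}\sum_{j=0}^k\sum_{a=0}^jq_{k,j,a}(w)\,x^ky^jz^a=\frac{xy\,(-w^2x^2+wx^2z+wx^2+2wx+z)}{(wx^2y+wx^2+xyz+wx-x-1)(wx-1)(x+1)}.$$
   Context: For $k\ge1$ and a nonempty $S=\{s_1<\dots<s_j\}\subseteq[k]$, define $p_1(S)=s_2-s_1,\dots,p_{j-1}(S)=s_j-s_{j-1}$, $p_j(S)=k+s_1-s_j$. For $1\le j\le k$ and $0\le a\le j$ define $$q_{k,j,a}(x)=\sum_{S\subseteq[k],\,|S|=j}\ \sum_{A\subseteq[j],\,|A|=a}\ \prod_{i=1}^j\Big(\sum_{b=0}^{p_i(S)-1}(-1)^{p_i(S)-1-b}x^b+(-1)^{p_i(S)}\mathbf 1\{i\notin A\}\Big),$$ and set $q_{k,0,0}=0$ and $q_{k,j,a}=0$ when $a>j$. *)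

theory Defs
  imports Main "HOL-Computational_Algebra.Polynomial" "HOL-Computational_Algebra.Formal_Power_Series"
    "HOL-Computational_Algebra.Polynomial_FPS"
begin

text \<open>The gaps p_i(S), i = 1..j, of a nonempty S \<subseteq> [k] (1-based index i).\<close>
definition gap :: "nat \<Rightarrow> nat set \<Rightarrow> nat \<Rightarrow> nat" where
  "gap k S i = (let s = sorted_list_of_set S; j = card S in
     if i < j then s ! i - s ! (i - 1) else k + s ! 0 - s ! (j - 1))"

definition qfactor :: "nat \<Rightarrow> bool \<Rightarrow> real poly" where
  "qfactor p notinA = (\<Sum>b<p. monom ((-1) ^ (p - 1 - b)) b) + [:(-1) ^ p * (if notinA then 1 else 0):]"

definition q :: "nat \<Rightarrow> nat \<Rightarrow> nat \<Rightarrow> real poly" where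
  "q k j a = (if j = 0 \<or> a > j then 0 else
     (\<Sum>S\<in>{S. S \<subseteq> {1..k} \<and> card S = j}.
        \<Sum>A\<in>{A. A \<subseteq> {1..j} \<and> card A = a}.
          \<Prod>i\<in>{1..j}. qfactor (gap k S i) (i \<notin> A)))"

text \<open>Four-variable formal power series, realised as nested power series
  R[[w]][[x]][[y]][[z]]; the outermost variable is z, the innermost w.\<close>
type_synonym fps4 = "real fps fps fps fps"

definition fZ :: fps4 where "fZ = fps_X"
definition fY :: fps4 where "fY = fps_const fps_X"
definition fX :: fps4 where "fX = fps_const (fps_const fps_X)"
definition fW :: fps4 where "fW = fps_const (fps_const (fps_const fps_X))"

definition Qser :: fps4 where
  "Qser = Abs_fps (\<lambda>a. Abs_fps (\<lambda>j. Abs_fps (\<lambda>k.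
      if 1 \<le> k \<and> j \<le> k \<and> a \<le> j then fps_of_poly (q k j a) else 0)))"

end

theory Submission
  imports Defs
begin

(*
  Removing the first cyclic gap gives a recursion for q. If S = {s_1 < ... < s_(j+1)} is a subset
  of [k] with first gap p = s_2 - s_1, then deleting s_2 and shifting s_3, ..., s_(j+1) down by p
  yields a j-subset of [k - p] whose cyclic gaps are those of S with p removed, and this is a
  bijection. With H(w,x,z) = sum over p of (f_p + z g_p) x^p, where f_p and g_p are the factors
  of a gap of length p at an index outside and inside A, this means Q = y K + y H Q, where
  K = x dH/dx collects the terms with j = 1. The single-gap series are rational: the factors
  telescope, g_(p+1) + g_p = w^p and f_p = g_p + (-1)^p, so (1 - w x) (1 + x) H = w x^2 + z x.
  Solving Q = y K / (1 - y H) gives the formula.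
*)

unbundle fps_syntax

section \<open>Cyclic gaps of increasing lists\<close>

definition increasing_lists :: "nat \<Rightarrow> nat \<Rightarrow> nat list set" where
  "increasing_lists k n = {L. sorted_wrt (<) L \<and> length L = n \<and> set L \<subseteq> {1..k}}"

definition cyclic_gaps :: "nat \<Rightarrow> nat list \<Rightarrow> nat list" where
  "cyclic_gaps k L = map2 (\<lambda>s t. t - s) L (tl L @ [k + hd L])"

lemma finite_increasing_lists: "finite (increasing_lists k n)"
  by (rule finite_subset[OF _ finite_lists_length_eq[of "{1..k}" n]])
    (auto simp: increasing_lists_def)

lemma sorted_list_of_set_set_strict:
  "sorted_wrt (<) L \<Longrightarrow> sorted_list_of_set (set L) = L"
  by (simp add: sorted_list_of_set_sort_remdups strict_sorted_iff distinct_remdups_id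
      sorted_sort_id)

lemma gap_set_eq_cyclic_gaps:
  assumes "sorted_wrt (<) L" and "i \<in> {1..length L}"
  shows "gap k (set L) i = cyclic_gaps k L ! (i - 1)"
proof -
  have "card (set L) = length L"
    using assms(1) by (simp add: strict_sorted_iff distinct_card)
  then show ?thesis
    using assms unfolding gap_def Let_def sorted_list_of_set_set_strict[OF assms(1)]
    by (cases L) (auto simp: cyclic_gaps_def nth_append nth_tl)
qed

lemma sum_card_subsets_eq_sum_increasing_lists:
  "(\<Sum>S | S \<subseteq> {1..k} \<and> card S = n. F S) = (\<Sum>L\<in>increasing_lists k n. F (set L))"
proof (rule sum.reindex_bij_witness[where i = set and j = sorted_list_of_set])
  fix S assume S: "S \<in> {S. S \<subseteq> {1..k} \<and> card S = n}"
  then have "finite S"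
    using finite_subset by blast
  with S show "set (sorted_list_of_set S) = S" "sorted_list_of_set S \<in> increasing_lists k n"
    and "F (set (sorted_list_of_set S)) = F S"
    by (auto simp: increasing_lists_def)
next
  fix L assume "L \<in> increasing_lists k n"
  then show "sorted_list_of_set (set L) = L" "set L \<in> {S. S \<subseteq> {1..k} \<and> card S = n}"
    by (auto simp: increasing_lists_def sorted_list_of_set_set_strict strict_sorted_iff
        distinct_card)
qed

definition stretch_first_gap :: "nat \<Rightarrow> nat list \<Rightarrow> nat list" where
  "stretch_first_gap p M = hd M # map (\<lambda>t. t + p) M"

definition shrink_first_gap :: "nat list \<Rightarrow> nat \<times> nat list" where
  "shrink_first_gap L = (let p = L ! 1 - L ! 0 in (p, L ! 0 # map (\<lambda>t. t - p) (drop 2 L)))"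

lemma map2_diff_shift:
  "map2 (\<lambda>s t. t - s) (map (\<lambda>t. t + p) xs) (map (\<lambda>t. t + p) ys)
     = map2 (\<lambda>s t. (t::nat) - s) xs ys"
  by (simp add: zip_map_map split_beta)

lemma cyclic_gaps_stretch_first_gap:
  assumes "M \<noteq> []" and "p \<le> k"
  shows "cyclic_gaps k (stretch_first_gap p M) = p # cyclic_gaps (k - p) M"
proof -
  let ?shift = "map (\<lambda>t. t + p)"
  have "cyclic_gaps k (stretch_first_gap p M)
      = p # map2 (\<lambda>s t. t - s) (?shift M) (tl (?shift M) @ [k + hd M])"
    using assms(1) by (cases M) (simp_all add: cyclic_gaps_def stretch_first_gap_def)
  also have "tl (?shift M) @ [k + hd M] = ?shift (tl M @ [k - p + hd M])"
    using assms(2) by (simp add: map_tl)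
  finally show ?thesis
    by (simp only: map2_diff_shift cyclic_gaps_def)
qed

lemma stretch_first_gap_in_increasing_lists:
  assumes "p \<in> {1..<k}" and "M \<in> increasing_lists (k - p) j" and "M \<noteq> []"
  shows "stretch_first_gap p M \<in> increasing_lists k (Suc j)"
  using assms
  by (cases M) (auto simp: increasing_lists_def stretch_first_gap_def sorted_wrt_map subset_iff)

lemma shrink_stretch_first_gap:
  "M \<noteq> [] \<Longrightarrow> shrink_first_gap (stretch_first_gap p M) = (p, M)"
  by (cases M) (simp_all add: shrink_first_gap_def stretch_first_gap_def comp_def)

lemma shrink_first_gap_in_increasing_lists:
  assumes "L \<in> increasing_lists k (Suc j)" and "1 \<le> j"
  shows "shrink_first_gap L \<in> Sigma {1..<k} (\<lambda>p. increasing_lists (k - p) j)"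
    and "case_prod stretch_first_gap (shrink_first_gap L) = L"
proof -
  obtain s0 s1 R where L: "L = s0 # s1 # R"
    using assms by (cases L rule: remdups_adj.cases) (auto simp: increasing_lists_def)
  define p where "p = s1 - s0"
  have s: "1 \<le> s0" "1 \<le> p" "s0 + p = s1" "s1 \<le> k" "\<forall>t\<in>set R. s1 < t \<and> t \<le> k"
    "sorted_wrt (<) R" "Suc (length R) = j"
    using assms by (auto simp: increasing_lists_def L p_def)
  have shrink: "shrink_first_gap L = (p, s0 # map (\<lambda>t. t - p) R)"
    by (simp add: shrink_first_gap_def L p_def Let_def)
  have "sorted_wrt (<) (map (\<lambda>t. t - p) R)"
    using s(3,5,6) by (auto simp: sorted_wrt_map elim!: sorted_wrt_mono_rel[rotated])
  then show "shrink_first_gap L \<in> Sigma {1..<k} (\<lambda>p. increasing_lists (k - p) j)"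
    using s unfolding shrink by (force simp: increasing_lists_def)
  have "map (\<lambda>t. t - p + p) R = R"
    using s(3,5) by (intro map_idI) auto
  then show "case_prod stretch_first_gap (shrink_first_gap L) = L"
    using s(3) unfolding shrink by (simp add: stretch_first_gap_def L comp_def)
qed

lemma sum_increasing_lists_first_gap:
  assumes "1 \<le> j"
  shows "(\<Sum>L\<in>increasing_lists k (Suc j). F (cyclic_gaps k L))
       = (\<Sum>p\<in>{1..<k}. \<Sum>M\<in>increasing_lists (k - p) j. F (p # cyclic_gaps (k - p) M))"
proof -
  let ?pairs = "Sigma {1..<k} (\<lambda>p. increasing_lists (k - p) j)"
  have nonempty: "M \<noteq> []" if "M \<in> increasing_lists m j" for M m
    using that assms by (auto simp: increasing_lists_def)
  have "(\<Sum>L\<in>increasing_lists k (Suc j). F (cyclic_gaps k L))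
      = (\<Sum>(p, M)\<in>?pairs. F (p # cyclic_gaps (k - p) M))"
    by (rule sum.reindex_bij_witness[symmetric, where j = "case_prod stretch_first_gap"
          and i = shrink_first_gap])
      (auto simp: nonempty shrink_stretch_first_gap stretch_first_gap_in_increasing_lists
        cyclic_gaps_stretch_first_gap
        shrink_first_gap_in_increasing_lists[OF _ assms, unfolded One_nat_def])
  also have "\<dots> = (\<Sum>p\<in>{1..<k}. \<Sum>M\<in>increasing_lists (k - p) j. F (p # cyclic_gaps (k - p) M))"
    by (rule sum.Sigma[symmetric]) (simp_all add: finite_increasing_lists)
  finally show ?thesis .
qed

section \<open>Sums of products over subsets of fixed size\<close>

(* The coefficient of z^a in the product over I of (u i + z v i). *)
definition mixed_prod_sum ::
    "'i set \<Rightarrow> ('i \<Rightarrow> 'a::comm_semiring_1) \<Rightarrow> ('i \<Rightarrow> 'a) \<Rightarrow> nat \<Rightarrow> 'a" where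
  "mixed_prod_sum I u v a = (\<Sum>A | A \<subseteq> I \<and> card A = a. \<Prod>i\<in>I. if i \<in> A then v i else u i)"

lemma mixed_prod_sum_empty: "mixed_prod_sum {} u v a = (if a = 0 then 1 else 0)"
proof -
  have subsets: "{A. A \<subseteq> {} \<and> card A = a} = (if a = 0 then {{}} else {})"
    by auto
  show ?thesis
    unfolding mixed_prod_sum_def subsets by simp
qed

lemma mixed_prod_sum_eq_0: "finite I \<Longrightarrow> card I < a \<Longrightarrow> mixed_prod_sum I u v a = 0"
  unfolding mixed_prod_sum_def by (rule sum.neutral) (auto dest: card_mono)

lemma subsets_insert_card_Suc:
  assumes "finite I" and "x \<notin> I"
  shows "{A. A \<subseteq> insert x I \<and> card A = Suc n}
       = {A. A \<subseteq> I \<and> card A = Suc n} \<union> insert x ` {A. A \<subseteq> I \<and> card A = n}"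
proof (intro equalityI subsetI)
  fix A assume A: "A \<in> {A. A \<subseteq> insert x I \<and> card A = Suc n}"
  show "A \<in> {A. A \<subseteq> I \<and> card A = Suc n} \<union> insert x ` {A. A \<subseteq> I \<and> card A = n}"
  proof (cases "x \<in> A")
    case True
    have "finite A"
      using A assms(1) finite_subset by blast
    then have "A - {x} \<in> {A. A \<subseteq> I \<and> card A = n}"
      using A True by auto
    moreover have "A = insert x (A - {x})"
      using True by blast
    ultimately show ?thesis
      by blast
  qed (use A in auto)
next
  fix A assume "A \<in> {A. A \<subseteq> I \<and> card A = Suc n} \<union> insert x ` {A. A \<subseteq> I \<and> card A = n}"
  then show "A \<in> {A. A \<subseteq> insert x I \<and> card A = Suc n}"
    using assms by (auto simp: card_insert_if finite_subset[OF _ assms(1)])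
qed

lemma mixed_prod_sum_insert:
  assumes "finite I" and "x \<notin> I"
  shows "mixed_prod_sum (insert x I) u v a
       = u x * mixed_prod_sum I u v a + (if a = 0 then 0 else v x * mixed_prod_sum I u v (a - 1))"
proof -
  let ?P = "\<lambda>A. \<Prod>i\<in>I. if i \<in> A then v i else u i"
  let ?P' = "\<lambda>A. \<Prod>i\<in>insert x I. if i \<in> A then v i else u i"
  let ?S = "\<lambda>n. {A. A \<subseteq> I \<and> card A = n}"
  have without_x: "?P' A = u x * ?P A" if "A \<subseteq> I" for A
    using that assms by (auto intro!: prod.cong simp: prod.insert)
  have with_x: "?P' (insert x A) = v x * ?P A" for A
  proof -
    have "(\<Prod>i\<in>I. if i \<in> insert x A then v i else u i) = ?P A"
      by (rule prod.cong) (use assms(2) in auto)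
    then show ?thesis
      using assms by simp
  qed
  show ?thesis
  proof (cases a)
    case 0
    have "{A. A \<subseteq> insert x I \<and> card A = 0} = ?S 0"
      using assms(1) by (auto dest: finite_subset)
    then show ?thesis
      using 0 without_x by (simp add: mixed_prod_sum_def sum_distrib_left)
  next
    case (Suc n)
    have "mixed_prod_sum (insert x I) u v a = sum ?P' (?S (Suc n)) + sum ?P' (insert x ` ?S n)"
      unfolding mixed_prod_sum_def Suc subsets_insert_card_Suc[OF assms]
      using assms by (intro sum.union_disjoint) auto
    also have "sum ?P' (?S (Suc n)) = (\<Sum>A\<in>?S (Suc n). u x * ?P A)"
      by (rule sum.cong) (simp_all add: without_x)
    also have "sum ?P' (insert x ` ?S n) = (\<Sum>A\<in>?S n. ?P' (insert x A))"
      using assms by (intro sum.reindex[unfolded comp_def]) (auto simp: inj_on_def)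
    also have "\<dots> = (\<Sum>A\<in>?S n. v x * ?P A)"
      by (simp only: with_x)
    finally show ?thesis
      using Suc by (simp add: mixed_prod_sum_def sum_distrib_left)
  qed
qed

lemma mixed_prod_sum_cong:
  "(\<And>i. i \<in> I \<Longrightarrow> u i = u' i) \<Longrightarrow> (\<And>i. i \<in> I \<Longrightarrow> v i = v' i)
    \<Longrightarrow> mixed_prod_sum I u v a = mixed_prod_sum I u' v' a"
  unfolding mixed_prod_sum_def by (intro sum.cong refl prod.cong) auto

lemma mixed_prod_sum_reindex:
  assumes "inj_on h I"
  shows "mixed_prod_sum (h ` I) u v a = mixed_prod_sum I (u \<circ> h) (v \<circ> h) a"
proof -
  have card_image_subset: "card (h ` B) = card B" if "B \<subseteq> I" for B
    using card_image[OF inj_on_subset[OF assms that]] .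
  have subsets: "{A. A \<subseteq> h ` I \<and> card A = a} = image h ` {B. B \<subseteq> I \<and> card B = a}"
  proof (intro equalityI subsetI)
    fix A assume A: "A \<in> {A. A \<subseteq> h ` I \<and> card A = a}"
    then have "A = h ` (I \<inter> h -` A)"
      by blast
    moreover have "card (h ` (I \<inter> h -` A)) = card (I \<inter> h -` A)"
      by (rule card_image_subset) blast
    ultimately show "A \<in> image h ` {B. B \<subseteq> I \<and> card B = a}"
      using A by (intro image_eqI[of A _ "I \<inter> h -` A"]) auto
  next
    fix A assume "A \<in> image h ` {B. B \<subseteq> I \<and> card B = a}"
    then obtain B where "A = h ` B" "B \<subseteq> I" "card B = a"
      by blast
    then show "A \<in> {A. A \<subseteq> h ` I \<and> card A = a}"
      using card_image_subset by blast
  qed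
  have "inj_on (image h) {B. B \<subseteq> I \<and> card B = a}"
    by (rule inj_on_image, rule inj_on_subset[OF assms]) blast
  then have "mixed_prod_sum (h ` I) u v a
      = (\<Sum>B | B \<subseteq> I \<and> card B = a. \<Prod>i\<in>h ` I. if i \<in> h ` B then v i else u i)"
    unfolding mixed_prod_sum_def subsets by (rule sum.reindex[unfolded comp_def])
  also have "\<dots> = mixed_prod_sum I (u \<circ> h) (v \<circ> h) a"
    unfolding mixed_prod_sum_def
  proof (rule sum.cong[OF refl])
    fix B assume B: "B \<in> {B. B \<subseteq> I \<and> card B = a}"
    have "(\<Prod>i\<in>h ` I. if i \<in> h ` B then v i else u i)
        = (\<Prod>i\<in>I. if h i \<in> h ` B then v (h i) else u (h i))"
      using prod.reindex[OF assms] by (simp add: comp_def)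
    also have "\<dots> = (\<Prod>i\<in>I. if i \<in> B then (v \<circ> h) i else (u \<circ> h) i)"
      using assms B by (intro prod.cong refl) (auto simp: inj_on_image_mem_iff)
    finally show "(\<Prod>i\<in>h ` I. if i \<in> h ` B then v i else u i)
        = (\<Prod>i\<in>I. if i \<in> B then (v \<circ> h) i else (u \<circ> h) i)" .
  qed
  finally show ?thesis .
qed

fun gap_weight :: "nat list \<Rightarrow> nat \<Rightarrow> real poly" where
  "gap_weight [] a = (if a = 0 then 1 else 0)"
| "gap_weight (p # ps) a = qfactor p True * gap_weight ps a
     + (if a = 0 then 0 else qfactor p False * gap_weight ps (a - 1))"

lemma gap_weight_eq_mixed_prod_sum:
  "gap_weight gs a = mixed_prod_sum {1..length gs}
     (\<lambda>i. qfactor (gs ! (i - 1)) True) (\<lambda>i. qfactor (gs ! (i - 1)) False) a"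
proof (induction gs arbitrary: a)
  case Nil
  then show ?case
    by (simp add: mixed_prod_sum_empty)
next
  case (Cons p gs)
  let ?u = "\<lambda>i. qfactor ((p # gs) ! (i - 1)) True"
  let ?v = "\<lambda>i. qfactor ((p # gs) ! (i - 1)) False"
  have interval: "{1..length (p # gs)} = insert 1 (Suc ` {1..length gs})"
    by (simp add: image_Suc_atLeastAtMost atLeastAtMost_insertL)
  have tail: "mixed_prod_sum (Suc ` {1..length gs}) ?u ?v b = gap_weight gs b" for b
    unfolding Cons.IH mixed_prod_sum_reindex[OF inj_Suc[THEN inj_on_subset, OF subset_UNIV]]
    by (rule mixed_prod_sum_cong) auto
  have "mixed_prod_sum (insert 1 (Suc ` {1..length gs})) ?u ?v a
      = ?u 1 * mixed_prod_sum (Suc ` {1..length gs}) ?u ?v a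
        + (if a = 0 then 0 else ?v 1 * mixed_prod_sum (Suc ` {1..length gs}) ?u ?v (a - 1))"
    by (rule mixed_prod_sum_insert) auto
  then show ?case
    unfolding interval tail by simp
qed

section \<open>Removing the first gap\<close>

lemma q_eq_mixed_prod_sum:
  assumes "1 \<le> j"
  shows "q k j a = (\<Sum>S | S \<subseteq> {1..k} \<and> card S = j.
     mixed_prod_sum {1..j} (\<lambda>i. qfactor (gap k S i) True) (\<lambda>i. qfactor (gap k S i) False) a)"
proof (cases "a \<le> j")
  case True
  have "(\<Prod>i\<in>{1..j}. qfactor (gap k S i) (i \<notin> A))
      = (\<Prod>i\<in>{1..j}. if i \<in> A then qfactor (gap k S i) False else qfactor (gap k S i) True)"
    for S A
    by (rule prod.cong) auto
  with True assms show ?thesis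
    by (simp add: q_def mixed_prod_sum_def)
next
  case False
  then show ?thesis
    by (simp add: q_def mixed_prod_sum_eq_0)
qed

lemma q_eq_sum_gap_weight:
  assumes "1 \<le> j"
  shows "q k j a = (\<Sum>L\<in>increasing_lists k j. gap_weight (cyclic_gaps k L) a)"
proof -
  have "gap_weight (cyclic_gaps k L) a = mixed_prod_sum {1..j}
      (\<lambda>i. qfactor (gap k (set L) i) True) (\<lambda>i. qfactor (gap k (set L) i) False) a"
    if "L \<in> increasing_lists k j" for L
  proof -
    have length: "length (cyclic_gaps k L) = j"
      using that by (simp add: increasing_lists_def cyclic_gaps_def)
    with that show ?thesis
      unfolding gap_weight_eq_mixed_prod_sum length
      by (intro mixed_prod_sum_cong) (simp_all add: increasing_lists_def gap_set_eq_cyclic_gaps)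
  qed
  then show ?thesis
    unfolding q_eq_mixed_prod_sum[OF assms] sum_card_subsets_eq_sum_increasing_lists
    by (intro sum.cong) auto
qed

lemma q_eq_0:
  assumes "\<not> (1 \<le> k \<and> j \<le> k \<and> a \<le> j)"
  shows "q k j a = 0"
proof (cases "j = 0 \<or> j < a")
  case False
  then have no_subsets: "{S. S \<subseteq> {1..k} \<and> card S = j} = {}"
    using assms by (auto dest: card_mono[OF finite_atLeastAtMost])
  show ?thesis
    unfolding q_def no_subsets by simp
qed (auto simp: q_def)

lemma q_1: "q k 1 a = (if a \<le> 1 then of_nat k * qfactor k (a = 0) else 0)"
proof -
  have lists: "increasing_lists k 1 = (\<lambda>s. [s]) ` {1..k}"
    by (auto simp: increasing_lists_def length_Suc_conv)
  show ?thesis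
    unfolding q_eq_sum_gap_weight[OF order_refl] lists
    by (subst sum.reindex) (auto simp: cyclic_gaps_def inj_on_def)
qed

lemma q_Suc:
  assumes "1 \<le> j"
  shows "q k (Suc j) a = (\<Sum>p\<in>{1..<k}. qfactor p True * q (k - p) j a
     + (if a = 0 then 0 else qfactor p False * q (k - p) j (a - 1)))"
proof -
  have "q k (Suc j) a
      = (\<Sum>p\<in>{1..<k}. \<Sum>M\<in>increasing_lists (k - p) j. gap_weight (p # cyclic_gaps (k - p) M) a)"
    using sum_increasing_lists_first_gap[OF assms, where F = "\<lambda>gs. gap_weight gs a"]
    by (simp add: q_eq_sum_gap_weight)
  then show ?thesis
    using assms by (cases a) (simp_all add: q_eq_sum_gap_weight sum.distrib sum_distrib_left)
qed

section \<open>The generating series of a single gap\<close>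

lemma fps_geometric_mult:
  "(1 - fps_const c * fps_X) * Abs_fps (\<lambda>n. c ^ n) = (1 :: 'a::comm_ring_1 fps)"
proof (rule fps_ext)
  fix n
  show "((1 - fps_const c * fps_X) * Abs_fps (\<lambda>n. c ^ n)) $ n = (1 :: 'a fps) $ n"
    by (cases n) (simp_all add: algebra_simps mult.assoc)
qed

lemma fps_X_deriv_nth: "(fps_X * fps_deriv f) $ n = of_nat n * f $ n"
  by (cases n) simp_all

lemma fps_X_deriv_quotient_rule:
  fixes e h :: "'a::comm_ring_1 fps"
  shows "e\<^sup>2 * (fps_X * fps_deriv h) = fps_X * (e * fps_deriv (e * h) - fps_deriv e * (e * h))"
  by (simp add: algebra_simps power2_eq_square)

lemma fps_of_poly_of_nat: "fps_of_poly (of_nat n) = of_nat n"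
  by (induction n) (simp_all add: fps_of_poly_add)

lemma qfactor_True: "qfactor p True = qfactor p False + [:(-1) ^ p:]"
  by (simp add: qfactor_def)

lemma qfactor_False_0 [simp]: "qfactor 0 False = 0"
  by (simp add: qfactor_def)

lemma qfactor_False_Suc_add: "qfactor (Suc p) False + qfactor p False = monom 1 p"
proof -
  have "qfactor (Suc p) False = monom 1 p + (\<Sum>b<p. monom ((-1) ^ (p - b)) b)"
    by (simp add: qfactor_def)
  moreover have "(\<Sum>b<p. monom ((-1) ^ (p - b)) b) = - qfactor p False"
  proof -
    have "monom ((-1) ^ (p - b)) b = - monom ((-1 :: real) ^ (p - 1 - b)) b" if "b < p" for b
    proof -
      have "p - b = Suc (p - 1 - b)"
        using that by arith
      then show ?thesis
        by (simp add: minus_monom)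
    qed
    then show ?thesis
      unfolding qfactor_def by (simp add: sum_negf[symmetric])
  qed
  ultimately show ?thesis
    by simp
qed

(* A series in x over R[[w]], so w is fps_const fps_X; the coefficient of x^p is the factor of a
   gap of length p. *)
definition gap_series :: "bool \<Rightarrow> real fps fps" where
  "gap_series b = Abs_fps (\<lambda>p. if p = 0 then 0 else fps_of_poly (qfactor p b))"

lemma gap_series_False_nth: "gap_series False $ p = fps_of_poly (qfactor p False)"
  by (simp add: gap_series_def)

lemma one_plus_X_mult_gap_series_False:
  "(1 + fps_X) * gap_series False = fps_X * Abs_fps (\<lambda>n. fps_X ^ n)"
proof (rule fps_ext)
  fix n
  show "((1 + fps_X) * gap_series False) $ n = (fps_X * Abs_fps (\<lambda>n. fps_X ^ n)) $ n"
  proof (cases n)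
    case (Suc m)
    have "((1 + fps_X) * gap_series False) $ n
        = fps_of_poly (qfactor (Suc m) False + qfactor m False)"
      by (simp add: Suc distrib_right gap_series_False_nth fps_of_poly_add)
    then show ?thesis
      by (simp add: Suc qfactor_False_Suc_add fps_of_poly_monom')
  qed (simp add: gap_series_False_nth distrib_right)
qed

lemma gap_series_True: "gap_series True = gap_series False + Abs_fps (\<lambda>n. (-1) ^ n) - 1"
  by (rule fps_ext)
    (simp add: gap_series_def qfactor_True fps_of_poly_add fps_of_poly_const poly_const_pow)

lemma gap_series_False_closed_form:
  "(1 - fps_const fps_X * fps_X) * (1 + fps_X) * gap_series False = fps_X"
  using fps_geometric_mult[of "fps_X :: real fps"]
  by (simp add: mult.assoc one_plus_X_mult_gap_series_False mult.left_commute[of _ fps_X])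

lemma gap_series_True_closed_form:
  "(1 - fps_const fps_X * fps_X) * (1 + fps_X) * gap_series True = fps_const fps_X * fps_X ^ 2"
proof -
  let ?w = "fps_const fps_X :: real fps fps"
  have alternating: "(1 + fps_X) * Abs_fps (\<lambda>n. (-1) ^ n) = (1 :: real fps fps)"
    using fps_geometric_mult[of "-1 :: real fps"] by (simp add: fps_const_neg[symmetric])
  have "(1 - ?w * fps_X) * (1 + fps_X) * gap_series True
      = (1 - ?w * fps_X) * (1 + fps_X) * gap_series False
        + (1 - ?w * fps_X) * ((1 + fps_X) * Abs_fps (\<lambda>n. (-1) ^ n))
        - (1 - ?w * fps_X) * (1 + fps_X)"
    unfolding gap_series_True by (simp add: algebra_simps)
  also have "\<dots> = fps_X + (1 - ?w * fps_X) - (1 - ?w * fps_X) * (1 + fps_X)"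
    unfolding alternating gap_series_False_closed_form by simp
  also have "\<dots> = ?w * fps_X ^ 2"
    by (simp add: algebra_simps power2_eq_square)
  finally show ?thesis .
qed

lemma gap_series_False_deriv_closed_form:
  "((1 - fps_const fps_X * fps_X) * (1 + fps_X))\<^sup>2 * (fps_X * fps_deriv (gap_series False))
     = fps_X * (1 + fps_const fps_X * fps_X ^ 2)"
  unfolding fps_X_deriv_quotient_rule gap_series_False_closed_form
  by (simp add: algebra_simps power2_eq_square)

lemma gap_series_True_deriv_closed_form:
  "((1 - fps_const fps_X * fps_X) * (1 + fps_X))\<^sup>2 * (fps_X * fps_deriv (gap_series True))
     = fps_const fps_X * fps_X ^ 2 * (2 + fps_X - fps_const fps_X * fps_X)"
  unfolding fps_X_deriv_quotient_rule gap_series_True_closed_form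
  by (simp add: algebra_simps power2_eq_square)

lemma gap_series_mult_nth:
  "(gap_series b * Abs_fps (\<lambda>k. fps_of_poly (f k))) $ k
     = fps_of_poly (\<Sum>p=1..k. qfactor p b * f (k - p))"
proof -
  have "(gap_series b * Abs_fps (\<lambda>k. fps_of_poly (f k))) $ k
      = (\<Sum>p=0..k. gap_series b $ p * fps_of_poly (f (k - p)))"
    by (simp add: fps_mult_nth)
  also have "\<dots> = fps_of_poly (\<Sum>p=1..k. qfactor p b * f (k - p))"
    by (simp add: sum.atLeast_Suc_atMost gap_series_def fps_of_poly_sum fps_of_poly_mult)
  finally show ?thesis .
qed

definition q_series :: "nat \<Rightarrow> nat \<Rightarrow> real fps fps" where
  "q_series j a = Abs_fps (\<lambda>k. fps_of_poly (q k j a))"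

lemma q_series_0: "q_series 0 a = 0"
  by (rule fps_ext) (simp add: q_series_def q_def)

lemma q_series_1:
  "q_series 1 a = (if a \<le> 1 then fps_X * fps_deriv (gap_series (a = 0)) else 0)"
  unfolding q_series_def q_1
  by (rule fps_ext) (simp add: fps_X_deriv_nth gap_series_def fps_of_poly_mult fps_of_poly_of_nat)

lemma q_series_Suc:
  assumes "1 \<le> j"
  shows "q_series (Suc j) a
    = gap_series True * q_series j a + (if a = 0 then 0 else gap_series False * q_series j (a - 1))"
proof (rule fps_ext)
  fix k
  have "(\<Sum>p=1..k. qfactor p b * q (k - p) j c) = (\<Sum>p\<in>{1..<k}. qfactor p b * q (k - p) j c)"
    for b c
    using assms by (cases k) (simp_all add: atLeastLessThanSuc_atLeastAtMost[symmetric] q_eq_0)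
  then show "q_series (Suc j) a $ k = (gap_series True * q_series j a
      + (if a = 0 then 0 else gap_series False * q_series j (a - 1))) $ k"
    using assms unfolding q_series_def
    by (simp add: gap_series_mult_nth q_Suc sum.distrib fps_of_poly_add)
qed

section \<open>Four variables\<close>

definition const4 :: "real fps fps \<Rightarrow> fps4" where
  "const4 u = fps_const (fps_const u)"

lemma const4_hom:
  "const4 (u * v) = const4 u * const4 v" "const4 (u + v) = const4 u + const4 v"
  "const4 (u - v) = const4 u - const4 v" "const4 (u ^ n) = const4 u ^ n" "const4 1 = 1"
  "const4 (numeral m) = numeral m"
  by (simp_all add: const4_def numeral_fps_const)

lemma fX_eq_const4: "fX = const4 fps_X" and fW_eq_const4: "fW = const4 (fps_const fps_X)"
  by (simp_all add: fX_def fW_def const4_def)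

lemma const4_mult_nth: "(const4 u * F) $ a $ j = u * F $ a $ j"
  by (simp add: const4_def)

lemma fY_mult_nth: "(fY * F) $ a $ j = (if j = 0 then 0 else F $ a $ (j - 1))"
  by (simp add: fY_def)

lemma fZ_mult_nth: "(fZ * F) $ a = (if a = 0 then 0 else F $ (a - 1))"
  by (simp add: fZ_def)

lemma Qser_nth: "Qser $ a $ j = q_series j a"
  by (rule fps_ext) (simp add: Qser_def q_series_def q_eq_0)

(* z marks the indices in A, whose factor is qfactor p False. *)
definition Hser :: fps4 where
  "Hser = const4 (gap_series True) + fZ * const4 (gap_series False)"

(* The terms with j = 1: a single point has k positions and one gap of length k. *)
definition Kser :: fps4 where
  "Kser = const4 (fps_X * fps_deriv (gap_series True))
     + fZ * const4 (fps_X * fps_deriv (gap_series False))"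

lemma Qser_functional_equation: "Qser = fY * (Kser + Hser * Qser)"
proof (rule fps_ext, rule fps_ext)
  fix a j
  show "Qser $ a $ j = (fY * (Kser + Hser * Qser)) $ a $ j"
  proof (cases j)
    case 0
    then show ?thesis
      by (simp add: Qser_nth fY_mult_nth q_series_0)
  next
    case (Suc i)
    have "(Hser * Qser) $ a $ i
        = gap_series True * q_series i a
          + (if a = 0 then 0 else gap_series False * q_series i (a - 1))"
      by (simp add: Hser_def distrib_right mult.assoc const4_mult_nth fZ_mult_nth Qser_nth)
    moreover have "Kser $ a $ i = (if i = 0 then q_series 1 a else 0)"
      by (simp add: Kser_def const4_def fZ_def q_series_1[unfolded One_nat_def])
    ultimately show ?thesis
      using Suc by (cases "i = 0") (simp_all add: Qser_nth fY_mult_nth q_series_0 q_series_Suc)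
  qed
qed

lemma Hser_closed_form: "(1 - fW * fX) * (1 + fX) * Hser = fW * fX\<^sup>2 + fZ * fX"
proof -
  let ?e = "(1 - fps_const fps_X * fps_X) * (1 + fps_X) :: real fps fps"
  have "(1 - fW * fX) * (1 + fX) * Hser
      = const4 (?e * gap_series True) + fZ * const4 (?e * gap_series False)"
    by (simp add: Hser_def fX_eq_const4 fW_eq_const4 const4_hom algebra_simps)
  then show ?thesis
    by (simp add: gap_series_True_closed_form gap_series_False_closed_form
        fX_eq_const4 fW_eq_const4 const4_hom)
qed

lemma Kser_closed_form:
  "((1 - fW * fX) * (1 + fX))\<^sup>2 * Kser
     = fW * fX\<^sup>2 * (2 + fX - fW * fX) + fZ * fX * (1 + fW * fX\<^sup>2)"
proof -
  let ?e = "(1 - fps_const fps_X * fps_X) * (1 + fps_X) :: real fps fps"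
  have "((1 - fW * fX) * (1 + fX))\<^sup>2 * Kser
      = const4 (?e\<^sup>2 * (fps_X * fps_deriv (gap_series True)))
        + fZ * const4 (?e\<^sup>2 * (fps_X * fps_deriv (gap_series False)))"
    by (simp add: Kser_def fX_eq_const4 fW_eq_const4 const4_hom algebra_simps)
  then show ?thesis
    by (simp add: gap_series_True_deriv_closed_form gap_series_False_deriv_closed_form
        fX_eq_const4 fW_eq_const4 const4_hom mult.assoc)
qed

(* inverse_mult_eq_1' needs a division ring of coefficients; here they are again power series. *)
lemma fps_mult_inverse_eq_1:
  fixes f :: "'a::{ring_1,inverse} fps"
  assumes "f $ 0 * inverse (f $ 0) = 1"
  shows "f * inverse f = 1"
  using fps_right_inverse[OF assms] by (simp add: fps_inverse_def)

lemma Qser_mult_denominator: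
  "Qser * ((fW * fX^2 * fY + fW * fX^2 + fX * fY * fZ + fW * fX - fX - 1)
       * (fW * fX - 1) * (fX + 1))
     = fX * fY * (- (fW^2 * fX^2) + fW * fX^2 * fZ + fW * fX^2 + 2 * fW * fX + fZ)"
proof -
  let ?E = "(1 - fW * fX) * (1 + fX)"
  have denominator: "(fW * fX^2 * fY + fW * fX^2 + fX * fY * fZ + fW * fX - fX - 1)
      * (fW * fX - 1) * (fX + 1) = (?E - fY * (?E * Hser)) * ?E"
    unfolding Hser_closed_form by (simp add: algebra_simps power2_eq_square)
  have Qser_eq: "Qser - fY * (Hser * Qser) = fY * Kser"
    by (subst (1) Qser_functional_equation) (simp add: algebra_simps)
  have "Qser * ((?E - fY * (?E * Hser)) * ?E) = (Qser - fY * (Hser * Qser)) * ?E\<^sup>2"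
    by (simp add: algebra_simps power2_eq_square)
  also have "\<dots> = fY * (?E\<^sup>2 * Kser)"
    unfolding Qser_eq by (simp add: ac_simps)
  also have "\<dots> = fX * fY * (- (fW^2 * fX^2) + fW * fX^2 * fZ + fW * fX^2 + 2 * fW * fX + fZ)"
    unfolding Kser_closed_form by (simp add: algebra_simps power2_eq_square)
  finally show ?thesis
    unfolding denominator .
qed

theorem propositionB5:
  shows "Qser =
    fX * fY * (- (fW^2 * fX^2) + fW * fX^2 * fZ + fW * fX^2 + 2 * fW * fX + fZ)
    * inverse ((fW * fX^2 * fY + fW * fX^2 + fX * fY * fZ + fW * fX - fX - 1)
               * (fW * fX - 1) * (fX + 1))"
proof -
  define D where
    "D = (fW * fX^2 * fY + fW * fX^2 + fX * fY * fZ + fW * fX - fX - 1) * (fW * fX - 1) * (fX + 1)"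
  have "D * inverse D = 1"
    by (intro fps_mult_inverse_eq_1) (simp add: D_def fW_def fX_def fY_def fZ_def)
  then have "Qser = (Qser * D) * inverse D"
    by (simp add: mult.assoc)
  then show ?thesis
    unfolding D_def Qser_mult_denominator .
qed

end
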